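(* Let $\Gamma$ be a connected drawing. Then $2|E_0| \ge N(U_5)+N(U_6)$.
   Context: Drawings are on the sphere: vertices are distinct points, edges (of a graph possibly with parallel edges, no loops) are Jordan arcs; any two edges share finitely many points, each a common endpoint or a proper crossing; no three edges cross at one point; no edge crosses itself; adjacent edges do not cross. $E_0$ is the set of uncrossed edges. An edge with $i$ crossings is split into $i+1$ edge-segments; an edge-segment is inner if both its endpoints are crossings and outer otherwise. The planarization replaces each crossing by a degree-$4$ vertex; the drawing is connected if its planarization is connected. Cells are the components of the sphere minus all vertices and edges; the boundary of a cell is a cyclic sequence alternating between edge-segments and vertices/crossings. Cell types: $U_5$: boundary $u$, uncrossed edge $uv$, $v$, outer segment, crossing, outer segment (two vertices $u,v$). $U_6$: boundary $u$, uncrossed edge $uv$, $v$, outer segment, crossing, inner segment, crossing, outer segment. $N(T)$ is the number of cells of type $T$. *)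

theory Defs
  imports "HOL-Analysis.Analysis"
begin

text \<open>Drawings on the unit sphere S^2 in R^3. Vertices: a finite set V of points;
  edges: a finite index set E, edge e drawn as the arc (injective path) g e.\<close>

definition S2 :: "(real^3) set" where
  "S2 = sphere 0 1"

definition edge_set :: "('e \<Rightarrow> real \<Rightarrow> real^3) \<Rightarrow> 'e \<Rightarrow> (real^3) set" where
  "edge_set g e = path_image (g e)"

definition endpoints :: "('e \<Rightarrow> real \<Rightarrow> real^3) \<Rightarrow> 'e \<Rightarrow> (real^3) set" where
  "endpoints g e = {pathstart (g e), pathfinish (g e)}"

definition proper_crossing :: "(real^3) set \<Rightarrow> (real^3) set \<Rightarrow> real^3 \<Rightarrow> bool" where
  "proper_crossing A B x \<longleftrightarrow>
     (\<exists>U h k. openin (top_of_set S2) U \<and> x \<in> U \<and>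
        homeomorphism U (ball (0::complex) 1) h k \<and> h x = 0 \<and>
        h ` (A \<inter> U) = {z \<in> ball 0 1. Im z = 0} \<and>
        h ` (B \<inter> U) = {z \<in> ball 0 1. Re z = 0})"

definition drawing :: "(real^3) set \<Rightarrow> 'e set \<Rightarrow> ('e \<Rightarrow> real \<Rightarrow> real^3) \<Rightarrow> bool" where
  "drawing V E g \<longleftrightarrow>
     finite V \<and> finite E \<and> V \<subseteq> S2 \<and>
     (\<forall>e\<in>E. arc (g e) \<and> edge_set g e \<subseteq> S2 \<and> endpoints g e \<subseteq> V \<and>
              edge_set g e \<inter> V = endpoints g e) \<and>
     (\<forall>e1\<in>E. \<forall>e2\<in>E. e1 \<noteq> e2 \<longrightarrow>
        finite (edge_set g e1 \<inter> edge_set g e2) \<and>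
        (\<forall>x\<in>edge_set g e1 \<inter> edge_set g e2.
            x \<in> endpoints g e1 \<inter> endpoints g e2 \<or>
            proper_crossing (edge_set g e1) (edge_set g e2) x)) \<and>
     (\<forall>x. x \<notin> V \<longrightarrow> card {e\<in>E. x \<in> edge_set g e} \<le> 2) \<and>
     (\<forall>e1\<in>E. \<forall>e2\<in>E. e1 \<noteq> e2 \<and> endpoints g e1 \<inter> endpoints g e2 \<noteq> {} \<longrightarrow>
        edge_set g e1 \<inter> edge_set g e2 \<subseteq> endpoints g e1 \<inter> endpoints g e2)"

text \<open>Connected drawing: the planarization is connected, i.e. the union of all vertices and
  edges is a connected set.\<close>
definition drawing_points :: "(real^3) set \<Rightarrow> 'e set \<Rightarrow> ('e \<Rightarrow> real \<Rightarrow> real^3) \<Rightarrow> (real^3) set" where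
  "drawing_points V E g = V \<union> (\<Union>e\<in>E. edge_set g e)"

definition connected_drawing :: "(real^3) set \<Rightarrow> 'e set \<Rightarrow> ('e \<Rightarrow> real \<Rightarrow> real^3) \<Rightarrow> bool" where
  "connected_drawing V E g \<longleftrightarrow> drawing V E g \<and> connected (drawing_points V E g)"

definition crossings :: "(real^3) set \<Rightarrow> 'e set \<Rightarrow> ('e \<Rightarrow> real \<Rightarrow> real^3) \<Rightarrow> (real^3) set" where
  "crossings V E g = {x. x \<notin> V \<and> (\<exists>e1\<in>E. \<exists>e2\<in>E. e1 \<noteq> e2 \<and> x \<in> edge_set g e1 \<and> x \<in> edge_set g e2)}"

definition uncrossed_edges :: "(real^3) set \<Rightarrow> 'e set \<Rightarrow> ('e \<Rightarrow> real \<Rightarrow> real^3) \<Rightarrow> 'e set" where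
  "uncrossed_edges V E g = {e\<in>E. edge_set g e \<inter> crossings V E g = {}}"

definition edge_segment ::
  "(real^3) set \<Rightarrow> 'e set \<Rightarrow> ('e \<Rightarrow> real \<Rightarrow> real^3) \<Rightarrow> 'e \<Rightarrow> real^3 \<Rightarrow> real^3 \<Rightarrow> (real^3) set \<Rightarrow> bool" where
  "edge_segment V E g e p q A \<longleftrightarrow> e \<in> E \<and>
     (\<exists>s t. 0 \<le> s \<and> s < t \<and> t \<le> 1 \<and> {g e s, g e t} = {p, q} \<and> A = g e ` {s..t} \<and>
            (\<forall>r. s < r \<and> r < t \<longrightarrow> g e r \<notin> crossings V E g))"

definition cells :: "(real^3) set \<Rightarrow> 'e set \<Rightarrow> ('e \<Rightarrow> real \<Rightarrow> real^3) \<Rightarrow> (real^3) set set" where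
  "cells V E g = components (S2 - drawing_points V E g)"

definition cell_boundary :: "(real^3) set \<Rightarrow> (real^3) set" where
  "cell_boundary c = closure c - c"

definition is_U5 :: "(real^3) set \<Rightarrow> 'e set \<Rightarrow> ('e \<Rightarrow> real \<Rightarrow> real^3) \<Rightarrow> (real^3) set \<Rightarrow> bool" where
  "is_U5 V E g c \<longleftrightarrow>
     (\<exists>u v e x e1 e2 A1 A2. u \<in> V \<and> v \<in> V \<and> e \<in> uncrossed_edges V E g \<and> endpoints g e = {u, v} \<and>
        x \<in> crossings V E g \<and>
        edge_segment V E g e1 v x A1 \<and> edge_segment V E g e2 x u A2 \<and>
        cell_boundary c = edge_set g e \<union> A1 \<union> A2)"

definition is_U6 :: "(real^3) set \<Rightarrow> 'e set \<Rightarrow> ('e \<Rightarrow> real \<Rightarrow> real^3) \<Rightarrow> (real^3) set \<Rightarrow> bool" where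
  "is_U6 V E g c \<longleftrightarrow>
     (\<exists>u v e x1 x2 e1 e2 e3 A1 A2 A3. u \<in> V \<and> v \<in> V \<and> e \<in> uncrossed_edges V E g \<and>
        endpoints g e = {u, v} \<and>
        x1 \<in> crossings V E g \<and> x2 \<in> crossings V E g \<and>
        edge_segment V E g e1 v x1 A1 \<and> edge_segment V E g e2 x1 x2 A2 \<and>
        edge_segment V E g e3 x2 u A3 \<and>
        cell_boundary c = edge_set g e \<union> A1 \<union> A2 \<union> A3)"

end

theory Submission
  imports Defs "HOL-Complex_Analysis.Winding_Numbers"
begin

(* Every cell of type U5 or U6 is bounded by a Jordan curve formed by an uncrossed edge e and an
   arc closing it (the chain of outer and inner segments), and no cell is of both types. So it
   suffices that at most two cells are bounded in this way by the same edge e. Suppose c1, c2, c3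
   were, and let p be an interior point of e. Puncture the sphere at a point of c3 and map the rest
   homeomorphically onto the plane. Near p, the winding numbers of the two Jordan curves bounding
   c1 and c3 differ by a locally constant amount, since they share the arc e. Points of c2 and of
   c3 close to p both lie outside the first curve, but points of c3 lie outside the second curve
   and points of c2 inside it, which is impossible. *)

section \<open>Loops in the plane sharing an arc\<close>

lemma winding_number_difference_locally_constant:
  fixes A C C' :: "real \<Rightarrow> complex"
  assumes paths: "path A" "path C" "path C'"
    and ends: "pathstart C = pathfinish A" "pathfinish C = pathstart A"
      "pathstart C' = pathfinish A" "pathfinish C' = pathstart A"
    and p: "p \<notin> path_image C \<union> path_image C'"
  obtains \<epsilon> k where "\<epsilon> > 0"
    "\<And>z. z \<in> ball p \<epsilon> \<Longrightarrow> z \<notin> path_image A \<Longrightarrow>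
       winding_number (A +++ C) z - winding_number (A +++ C') z = k"
proof -
  \<comment> \<open>the two winding numbers differ by that of the loop \<open>L\<close>, which stays away from \<open>p\<close>\<close>
  define L where "L = C +++ reversepath C'"
  have L: "path L" "pathfinish L = pathstart L" "path_image L = path_image C \<union> path_image C'"
    using paths ends by (auto simp: L_def path_image_join)
  have "open (- path_image L)"
    using closed_path_image[OF L(1)] by (rule open_Compl)
  moreover have "p \<in> - path_image L"
    using p L(3) by simp
  ultimately obtain \<epsilon> where \<epsilon>: "\<epsilon> > 0" "ball p \<epsilon> \<subseteq> - path_image L"
    using open_contains_ball_eq by metis
  then have "winding_number L constant_on ball p \<epsilon>"
    using winding_number_constant[OF L(1,2) connected_ball] by blast
  then obtain k where k: "\<And>z. z \<in> ball p \<epsilon> \<Longrightarrow> winding_number L z = k"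
    unfolding constant_on_def by blast
  show thesis
  proof (rule that[OF \<epsilon>(1)])
    fix z assume z: "z \<in> ball p \<epsilon>" "z \<notin> path_image A"
    have "z \<notin> path_image C" "z \<notin> path_image C'" using z \<epsilon>(2) L(3) by auto
    then have "winding_number (A +++ C) z - winding_number (A +++ C') z = winding_number L z"
      using paths ends z(2) unfolding L_def
      by (simp add: winding_number_join winding_number_reversepath)
    then show "winding_number (A +++ C) z - winding_number (A +++ C') z = k"
      using k[OF z(1)] by simp
  qed
qed

lemma outside_simple_loop_locally_constant_near_shared_arc:
  fixes A C C' :: "real \<Rightarrow> complex"
  assumes loops: "simple_path (A +++ C)" "simple_path (A +++ C')"
    and ends: "pathstart C = pathfinish A" "pathfinish C = pathstart A"
      "pathstart C' = pathfinish A" "pathfinish C' = pathstart A"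
    and p: "p \<notin> path_image C \<union> path_image C'"
  obtains \<epsilon> where "\<epsilon> > 0"
    "\<And>z z'. z \<in> ball p \<epsilon> \<Longrightarrow> z' \<in> ball p \<epsilon> \<Longrightarrow>
       z \<in> outside (path_image (A +++ C)) \<Longrightarrow> z' \<in> outside (path_image (A +++ C)) \<Longrightarrow>
       z \<in> outside (path_image (A +++ C')) \<Longrightarrow> z' \<notin> path_image (A +++ C') \<Longrightarrow>
       z' \<in> outside (path_image (A +++ C'))"
proof -
  have paths: "path A" "path C" "path C'"
    using loops ends by (auto dest: simple_path_imp_path)
  have closed: "pathfinish (A +++ C) = pathstart (A +++ C)" "pathfinish (A +++ C') = pathstart (A +++ C')"
    using ends by auto
  obtain \<epsilon> k where \<epsilon>: "\<epsilon> > 0"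
    and k: "\<And>z. z \<in> ball p \<epsilon> \<Longrightarrow> z \<notin> path_image A \<Longrightarrow>
       winding_number (A +++ C) z - winding_number (A +++ C') z = k"
    using winding_number_difference_locally_constant[OF paths ends p] by blast
  show thesis
  proof (rule that[OF \<epsilon>])
    fix z z'
    assume z: "z \<in> ball p \<epsilon>" "z' \<in> ball p \<epsilon>"
      and out: "z \<in> outside (path_image (A +++ C))" "z' \<in> outside (path_image (A +++ C))"
        "z \<in> outside (path_image (A +++ C'))"
      and z'_off: "z' \<notin> path_image (A +++ C')"
    have "path_image A \<subseteq> path_image (A +++ C)"
      using ends by (simp add: path_image_join)
    then have off_A: "z \<notin> path_image A" "z' \<notin> path_image A"
      using out(1,2) outside_no_overlap by blast+
    have "winding_number (A +++ C') z' = winding_number (A +++ C') z"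
      using k[OF z(1) off_A(1)] k[OF z(2) off_A(2)] out paths ends closed
      by (simp add: winding_number_zero_in_outside)
    also have "\<dots> = 0"
      using out(3) paths ends closed by (simp add: winding_number_zero_in_outside)
    finally have "winding_number (A +++ C') z' = 0" .
    then show "z' \<in> outside (path_image (A +++ C'))"
      using simple_closed_path_norm_winding_number_inside[OF loops(2)] z'_off inside_Un_outside
      by (metis ComplI UnE norm_zero zero_neq_one)
  qed
qed

section \<open>Simple loops on a punctured sphere\<close>

lemma puncture_in_closure_of_unbounded_image:
  fixes h :: "'a::metric_space \<Rightarrow> complex"
  assumes S: "compact S" and hom: "homeomorphism (S - {q}) UNIV h k" and U: "\<not> bounded U"
  shows "q \<in> closure (k ` U)"
  unfolding closure_approachable
proof (intro allI impI)
  fix \<epsilon> :: real assume "\<epsilon> > 0"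
  define K where "K = S - ball q \<epsilon>"
  have "compact K" "K \<subseteq> S - {q}"
    using S \<open>\<epsilon> > 0\<close> by (auto simp: K_def compact_diff)
  then have "compact (h ` K)"
    using hom by (meson compact_continuous_image continuous_on_subset homeomorphism_cont1)
  then obtain R where R: "\<And>w. w \<in> h ` K \<Longrightarrow> norm w \<le> R"
    by (meson bounded_iff compact_imp_bounded)
  obtain z where z: "z \<in> U" "norm z > R"
    using U by (meson bounded_iff not_le)
  have "k z \<in> S - {q}" "h (k z) = z"
    using hom by (auto simp: homeomorphism_def)
  then have "k z \<notin> K"
    using R z(2) by force
  then have "dist (k z) q < \<epsilon>"
    using \<open>k z \<in> S - {q}\<close> by (auto simp: K_def dist_commute)
  then show "\<exists>x\<in>k ` U. dist x q < \<epsilon>"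
    using z(1) by blast
qed

lemma connected_component_disjoint_clopenin:
  assumes "openin (top_of_set S) T" "closedin (top_of_set S) T" "x \<in> S - T"
  shows "connected_component_set S x \<inter> T = {}"
proof -
  define C where "C = connected_component_set S x"
  have C: "connected C" "C \<subseteq> S" "x \<in> C"
    using assms(3) by (auto simp: C_def connected_component_subset)
  have "openin (top_of_set C) (C \<inter> T)" "closedin (top_of_set C) (C \<inter> T)"
    using assms(1,2) C(2) by (auto simp: openin_open closedin_closed openin_open_Int closedin_closed_Int)
  then have "C \<inter> T = {} \<or> C \<inter> T = C"
    using connected_clopen[THEN iffD1, OF C(1), rule_format, of "C \<inter> T"] by blast
  then show ?thesis
    using C(3) assms(3) unfolding C_def by blast
qed

lemma homeomorphism_inverse_image_avoids:
  assumes hom: "homeomorphism (S - {q}) UNIV h k" and T: "T \<inter> h ` J = {}"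
  shows "k ` T \<subseteq> S - {q} - J"
proof
  fix x assume "x \<in> k ` T"
  then obtain z where z: "z \<in> T" "x = k z"
    by blast
  then have "h x \<notin> h ` J"
    using homeomorphism_apply2[OF hom] T by auto
  moreover have "x \<in> S - {q}"
    using homeomorphism_image2[OF hom] z(2) by blast
  ultimately show "x \<in> S - {q} - J"
    by blast
qed

lemma clopenin_image_inside_punctured:
  fixes h :: "'a::metric_space \<Rightarrow> complex"
  assumes hom: "homeomorphism (S - {q}) UNIV h k" and J: "compact J" "J \<subseteq> S - {q}"
  shows "openin (top_of_set (S - J)) (k ` inside (h ` J))"
    and "closedin (top_of_set (S - J)) (k ` inside (h ` J))"
proof -
  define I where "I = k ` inside (h ` J)"
  have kh: "\<And>x. x \<in> S - {q} \<Longrightarrow> k (h x) = x" and hk: "\<And>z. h (k z) = z"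
    and k_into: "\<And>z. k z \<in> S - {q}"
    using hom by (auto simp: homeomorphism_def)
  have "compact (h ` J)"
    using compact_continuous_image[OF continuous_on_subset[OF homeomorphism_cont1[OF hom] J(2)] J(1)] .
  then have hJ: "bounded (h ` J)" "closed (h ` J)"
    by (simp_all add: compact_imp_bounded compact_imp_closed)
  have k_J: "k z \<in> J" if "z \<in> h ` J" for z
    using that kh J(2) by force
  have I_eq: "I = (S - {q}) \<inter> h -` inside (h ` J)"
    unfolding I_def using kh hk k_into by (auto simp: image_iff) metis
  have I_sub: "I \<subseteq> S - J"
    unfolding I_def using homeomorphism_inverse_image_avoids[OF hom inside_no_overlap] by blast
  have "openin (top_of_set (S - {q})) I"
    unfolding I_eq using open_inside[OF hJ(2)]
    by (meson continuous_openin_preimage_gen homeomorphism_cont1[OF hom])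
  then obtain U where U: "open U" "I = (S - {q}) \<inter> U"
    by (auto simp: openin_open)
  have "I = (S - J) \<inter> (U - {q})"
    using U(2) I_sub by blast
  then show "openin (top_of_set (S - J)) (k ` inside (h ` J))"
    using U(1) by (simp add: I_def open_delete openin_open_Int)
  define F where "F = k ` closure (inside (h ` J))"
  have "compact F"
    unfolding F_def using bounded_inside[OF hJ(1)] homeomorphism_cont2[OF hom]
    by (meson compact_closure compact_continuous_image continuous_on_subset subset_UNIV)
  moreover have "I = (S - J) \<inter> F"
    using closure_inside_subset[OF hJ(2)] closure_subset[of "inside (h ` J)"] k_J I_sub
    unfolding F_def I_def by blast
  ultimately show "closedin (top_of_set (S - J)) (k ` inside (h ` J))"
    by (simp add: I_def closedin_closed_Int compact_imp_closed)
qed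

lemma image_outside_subset_component_of_puncture:
  fixes h :: "'a::metric_space \<Rightarrow> complex"
  assumes S: "compact S" "q \<in> S" and hom: "homeomorphism (S - {q}) UNIV h k"
    and J: "compact J" "J \<subseteq> S - {q}"
  shows "k ` outside (h ` J) \<subseteq> connected_component_set (S - J) q"
proof -
  define L where "L = k ` outside (h ` J)"
  have "compact (h ` J)"
    using compact_continuous_image[OF continuous_on_subset[OF homeomorphism_cont1[OF hom] J(2)] J(1)] .
  then have hJ: "bounded (h ` J)"
    by (simp add: compact_imp_bounded)
  have "connected (outside (h ` J))"
    using connected_outside[OF hJ] by simp
  then have "connected L"
    unfolding L_def using homeomorphism_cont2[OF hom]
    by (meson connected_continuous_image continuous_on_subset subset_UNIV)
  moreover have "q \<in> closure L"
    unfolding L_def using puncture_in_closure_of_unbounded_image[OF S(1) hom] unbounded_outside[OF hJ] .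
  then have "insert q L \<subseteq> closure L"
    using closure_subset by blast
  ultimately have "connected (insert q L)"
    using connected_intermediate_closure[OF _ subset_insertI] by blast
  moreover have "L \<subseteq> S - J"
    unfolding L_def using homeomorphism_inverse_image_avoids[OF hom outside_no_overlap] by blast
  then have "insert q L \<subseteq> S - J"
    using S(2) J(2) by blast
  ultimately have "insert q L \<subseteq> connected_component_set (S - J) q"
    by (intro connected_component_maximal) auto
  then show ?thesis
    by (simp add: L_def)
qed

lemma connected_component_of_puncture_iff_outside:
  fixes h :: "'a::metric_space \<Rightarrow> complex"
  assumes S: "compact S" "q \<in> S" and hom: "homeomorphism (S - {q}) UNIV h k"
    and J: "compact J" "J \<subseteq> S - {q}" and y: "y \<in> S - J - {q}"
  shows "y \<in> connected_component_set (S - J) q \<longleftrightarrow> h y \<in> outside (h ` J)"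
proof
  assume y_comp: "y \<in> connected_component_set (S - J) q"
  have khy: "k (h y) = y"
    using homeomorphism_apply1[OF hom] y by blast
  have "q \<notin> k ` inside (h ` J)"
    using homeomorphism_image2[OF hom] by blast
  then have "connected_component_set (S - J) q \<inter> k ` inside (h ` J) = {}"
    using connected_component_disjoint_clopenin clopenin_image_inside_punctured[OF hom J] S(2) J(2)
    by blast
  then have "h y \<notin> inside (h ` J)"
    using y_comp khy by (metis disjoint_iff image_eqI)
  moreover have "inj_on h (S - {q})"
    using hom by (metis homeomorphism_apply1 inj_on_inverseI)
  then have "h y \<notin> h ` J"
    using inj_on_image_mem_iff[OF _ _ J(2)] y by blast
  ultimately show "h y \<in> outside (h ` J)"
    using inside_Un_outside by blast
next
  assume "h y \<in> outside (h ` J)"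
  moreover have "k (h y) = y"
    using homeomorphism_apply1[OF hom] y by blast
  ultimately show "y \<in> connected_component_set (S - J) q"
    using image_outside_subset_component_of_puncture[OF S hom J] by (metis image_subset_iff)
qed

lemma inside_if_not_in_component_of_puncture:
  fixes h :: "'a::metric_space \<Rightarrow> complex"
  assumes S: "compact S" "q \<in> S" and hom: "homeomorphism (S - {q}) UNIV h k"
    and J: "compact J" "J \<subseteq> S - {q}"
    and x: "x \<in> S - J" "x \<notin> connected_component_set (S - J) q"
  shows "h x \<in> inside (h ` J)"
proof -
  have inj: "inj_on h (S - {q})"
    using hom by (metis homeomorphism_apply1 inj_on_inverseI)
  have x': "x \<in> S - J - {q}"
    using x S(2) J(2) by auto
  then have "h x \<notin> outside (h ` J)"
    using connected_component_of_puncture_iff_outside[OF S hom J] x(2) by blast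
  moreover have "h x \<notin> h ` J"
    using inj_on_image_mem_iff[OF inj _ J(2)] x' by blast
  ultimately show ?thesis
    using inside_Un_outside by blast
qed

lemma simple_loop_homeomorphic_image:
  assumes hom: "homeomorphism (S - {q}) UNIV h k"
    and \<gamma>: "simple_path \<gamma>" "path_image \<gamma> \<subseteq> S - {q}"
  shows "simple_path (h \<circ> \<gamma>)" "path_image (h \<circ> \<gamma>) = h ` path_image \<gamma>"
proof -
  have "inj_on h (S - {q})"
    using hom by (metis homeomorphism_apply1 inj_on_inverseI)
  then show "simple_path (h \<circ> \<gamma>)"
    using simple_path_continuous_image[OF \<gamma>(1)] homeomorphism_cont1[OF hom] \<gamma>(2)
    by (meson continuous_on_subset inj_on_subset)
  show "path_image (h \<circ> \<gamma>) = h ` path_image \<gamma>"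
    by (rule path_image_compose)
qed

text \<open>The Jordan curve theorem, transported to \<open>S\<close> through the puncture: the complement of a
  simple loop has at most two components.\<close>

lemma simple_loop_complement_components:
  fixes \<gamma> :: "real \<Rightarrow> 'a::metric_space" and h :: "'a \<Rightarrow> complex"
  assumes S: "compact S" "q \<in> S" and hom: "homeomorphism (S - {q}) UNIV h k"
    and \<gamma>: "simple_path \<gamma>" "pathfinish \<gamma> = pathstart \<gamma>" "path_image \<gamma> \<subseteq> S - {q}"
    and c: "c \<in> components (S - path_image \<gamma>)" "q \<notin> c"
    and y: "y \<in> S - path_image \<gamma> - c"
  shows "y \<in> connected_component_set (S - path_image \<gamma>) q"
proof (rule ccontr)
  assume y_comp: "y \<notin> connected_component_set (S - path_image \<gamma>) q"
  define J where "J = path_image \<gamma>"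
  have J: "compact J" "J \<subseteq> S - {q}"
    using \<gamma> by (auto simp: J_def compact_simple_path_image)
  note h\<gamma> = simple_loop_homeomorphic_image[OF hom \<gamma>(1,3)]
  have "pathfinish (h \<circ> \<gamma>) = pathstart (h \<circ> \<gamma>)"
    using \<gamma>(2) by (simp add: pathfinish_compose pathstart_compose)
  then have "connected (inside (h ` J))"
    using Jordan_inside_outside[OF h\<gamma>(1)] h\<gamma>(2) by (simp add: J_def)
  then have conn: "connected (k ` inside (h ` J))"
    using connected_continuous_image continuous_on_subset homeomorphism_cont2[OF hom] by blast
  have sub: "k ` inside (h ` J) \<subseteq> S - J"
    using homeomorphism_inverse_image_avoids[OF hom inside_no_overlap] by blast
  have inside: "x \<in> k ` inside (h ` J)"
    if "x \<in> S - J" "x \<notin> connected_component_set (S - J) q" for x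
  proof -
    have "x \<noteq> q"
      using that S(2) J(2) by auto
    then have "k (h x) = x"
      using homeomorphism_apply1[OF hom] that(1) by blast
    then show ?thesis
      using inside_if_not_in_component_of_puncture[OF S(1,2) hom J that] by (metis image_eqI)
  qed
  obtain y1 where y1: "y1 \<in> S - J" and c_eq: "c = connected_component_set (S - J) y1"
    using c(1) unfolding J_def components_iff by blast
  have "y1 \<notin> connected_component_set (S - J) q"
  proof
    assume "y1 \<in> connected_component_set (S - J) q"
    then have "c = connected_component_set (S - J) q"
      using c_eq connected_component_eq by blast
    then show False
      using c(2) S(2) J(2) by auto
  qed
  then have "k ` inside (h ` J) \<subseteq> connected_component_set (S - J) y1"
    using connected_component_maximal[OF inside[OF y1] conn sub] by blast
  moreover have "y \<in> k ` inside (h ` J)"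
    using inside y y_comp unfolding J_def by blast
  ultimately show False
    using y c_eq unfolding J_def by blast
qed

definition closing_arc :: "(real \<Rightarrow> 'a::topological_space) \<Rightarrow> (real \<Rightarrow> 'a) \<Rightarrow> bool" where
  "closing_arc \<alpha> \<beta> \<longleftrightarrow> arc \<beta> \<and> pathstart \<beta> = pathfinish \<alpha> \<and> pathfinish \<beta> = pathstart \<alpha> \<and>
     path_image \<alpha> \<inter> path_image \<beta> \<subseteq> {pathstart \<alpha>, pathfinish \<alpha>}"

lemma simple_loop_join_closing_arc:
  assumes "arc \<alpha>" "closing_arc \<alpha> \<beta>"
  shows "simple_path (\<alpha> +++ \<beta>)" "pathfinish (\<alpha> +++ \<beta>) = pathstart (\<alpha> +++ \<beta>)"
    "path_image (\<alpha> +++ \<beta>) = path_image \<alpha> \<union> path_image \<beta>"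
proof -
  have \<beta>: "arc \<beta>" "pathstart \<beta> = pathfinish \<alpha>" "pathfinish \<beta> = pathstart \<alpha>"
    "path_image \<alpha> \<inter> path_image \<beta> \<subseteq> {pathstart \<alpha>, pathstart \<beta>}"
    using assms(2) unfolding closing_arc_def by auto
  show "simple_path (\<alpha> +++ \<beta>)"
    using simple_path_join_loop[OF assms(1) \<beta>(1)] \<beta>(2-4) by simp
  show "pathfinish (\<alpha> +++ \<beta>) = pathstart (\<alpha> +++ \<beta>)"
    using \<beta>(3) by simp
  show "path_image (\<alpha> +++ \<beta>) = path_image \<alpha> \<union> path_image \<beta>"
    using \<beta>(2) by (simp add: path_image_join)
qed

lemma outside_locally_constant_near_shared_arc_punctured:
  fixes \<alpha> \<beta> \<beta>' :: "real \<Rightarrow> 'a::metric_space" and h :: "'a \<Rightarrow> complex"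
  assumes hom: "homeomorphism (S - {q}) UNIV h k"
    and arcs: "arc \<alpha>" "closing_arc \<alpha> \<beta>" "closing_arc \<alpha> \<beta>'"
    and J: "path_image (\<alpha> +++ \<beta>) \<subseteq> S - {q}" "path_image (\<alpha> +++ \<beta>') \<subseteq> S - {q}"
    and p: "p \<in> path_image \<alpha> - path_image \<beta> - path_image \<beta>'"
  obtains \<delta> where "\<delta> > 0"
    "\<And>y y'. y \<in> S - {q} \<Longrightarrow> y' \<in> S - {q} \<Longrightarrow> dist y p < \<delta> \<Longrightarrow> dist y' p < \<delta> \<Longrightarrow>
       h y \<in> outside (h ` path_image (\<alpha> +++ \<beta>)) \<Longrightarrow> h y' \<in> outside (h ` path_image (\<alpha> +++ \<beta>)) \<Longrightarrow>
       h y \<in> outside (h ` path_image (\<alpha> +++ \<beta>')) \<Longrightarrow> y' \<notin> path_image (\<alpha> +++ \<beta>') \<Longrightarrow>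
       h y' \<in> outside (h ` path_image (\<alpha> +++ \<beta>'))"
proof -
  note loop = simple_loop_join_closing_arc[OF arcs(1,2)] and loop' = simple_loop_join_closing_arc[OF arcs(1,3)]
  have inj: "inj_on h (S - {q})"
    using hom by (metis homeomorphism_apply1 inj_on_inverseI)
  have simple: "simple_path ((h \<circ> \<alpha>) +++ (h \<circ> \<beta>))" "simple_path ((h \<circ> \<alpha>) +++ (h \<circ> \<beta>'))"
    using simple_loop_homeomorphic_image(1)[OF hom loop(1) J(1)]
      simple_loop_homeomorphic_image(1)[OF hom loop'(1) J(2)] by (simp_all add: path_compose_join)
  have images: "path_image ((h \<circ> \<alpha>) +++ (h \<circ> \<beta>)) = h ` path_image (\<alpha> +++ \<beta>)"
    "path_image ((h \<circ> \<alpha>) +++ (h \<circ> \<beta>')) = h ` path_image (\<alpha> +++ \<beta>')"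
    by (simp_all flip: path_compose_join add: path_image_compose)
  have ends: "pathstart (h \<circ> \<beta>) = pathfinish (h \<circ> \<alpha>)" "pathfinish (h \<circ> \<beta>) = pathstart (h \<circ> \<alpha>)"
    "pathstart (h \<circ> \<beta>') = pathfinish (h \<circ> \<alpha>)" "pathfinish (h \<circ> \<beta>') = pathstart (h \<circ> \<alpha>)"
    using arcs(2,3) by (simp_all add: closing_arc_def pathstart_compose pathfinish_compose)
  have p_in: "p \<in> S - {q}"
    using p J(1) loop(3) by auto
  have "h p \<notin> path_image (h \<circ> \<beta>) \<union> path_image (h \<circ> \<beta>')"
    using p p_in J loop(3) loop'(3) inj_on_image_mem_iff[OF inj] by (simp add: path_image_compose)
  then obtain \<epsilon> where \<epsilon>: "\<epsilon> > 0" and outside_const: "\<And>z z'. z \<in> ball (h p) \<epsilon> \<Longrightarrow> z' \<in> ball (h p) \<epsilon> \<Longrightarrow>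
       z \<in> outside (h ` path_image (\<alpha> +++ \<beta>)) \<Longrightarrow> z' \<in> outside (h ` path_image (\<alpha> +++ \<beta>)) \<Longrightarrow>
       z \<in> outside (h ` path_image (\<alpha> +++ \<beta>')) \<Longrightarrow> z' \<notin> h ` path_image (\<alpha> +++ \<beta>') \<Longrightarrow>
       z' \<in> outside (h ` path_image (\<alpha> +++ \<beta>'))"
    by (rule outside_simple_loop_locally_constant_near_shared_arc[OF simple ends, unfolded images]) (rule that)
  obtain \<delta> where \<delta>: "\<delta> > 0" "\<forall>y \<in> S - {q}. dist y p < \<delta> \<longrightarrow> dist (h y) (h p) < \<epsilon>"
    using continuous_on_iff[THEN iffD1, OF homeomorphism_cont1[OF hom], rule_format, OF p_in \<epsilon>] by blast
  show thesis
  proof (rule that[OF \<delta>(1)])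
    fix y y' assume y: "y \<in> S - {q}" "y' \<in> S - {q}" "dist y p < \<delta>" "dist y' p < \<delta>"
      and out: "h y \<in> outside (h ` path_image (\<alpha> +++ \<beta>))" "h y' \<in> outside (h ` path_image (\<alpha> +++ \<beta>))"
        "h y \<in> outside (h ` path_image (\<alpha> +++ \<beta>'))"
      and y'_off: "y' \<notin> path_image (\<alpha> +++ \<beta>')"
    have "h y \<in> ball (h p) \<epsilon>" "h y' \<in> ball (h p) \<epsilon>"
      using \<delta>(2) y by (auto simp: dist_commute)
    moreover have "h y' \<notin> h ` path_image (\<alpha> +++ \<beta>')"
      using inj_on_image_mem_iff[OF inj y(2) J(2)] y'_off by blast
    ultimately show "h y' \<in> outside (h ` path_image (\<alpha> +++ \<beta>'))"
      using outside_const out by blast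
  qed
qed

lemma three_regions_not_adjacent_at_shared_arc_punctured:
  fixes \<alpha> \<beta> \<beta>' :: "real \<Rightarrow> 'a::metric_space" and h :: "'a \<Rightarrow> complex"
  assumes S: "compact S" "q \<in> S" and hom: "homeomorphism (S - {q}) UNIV h k"
    and arcs: "arc \<alpha>" "closing_arc \<alpha> \<beta>" "closing_arc \<alpha> \<beta>'"
    and J: "path_image (\<alpha> +++ \<beta>) \<subseteq> S - {q}" "path_image (\<alpha> +++ \<beta>') \<subseteq> S - {q}"
    and c1: "c1 \<in> components (S - path_image (\<alpha> +++ \<beta>))"
    and c3: "c3 = connected_component_set (S - path_image (\<alpha> +++ \<beta>')) q" "c3 \<inter> path_image \<beta> = {}"
    and c2: "connected c2" "c2 \<subseteq> S - path_image (\<alpha> +++ \<beta>) - path_image (\<alpha> +++ \<beta>')"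
    and disjoint: "c1 \<inter> c2 = {}" "c1 \<inter> c3 = {}" "c2 \<inter> c3 = {}"
    and p: "p \<in> path_image \<alpha> - path_image \<beta> - path_image \<beta>'" "p \<in> closure c2" "p \<in> closure c3"
  shows False
proof -
  define J J' where "J = path_image (\<alpha> +++ \<beta>)" and "J' = path_image (\<alpha> +++ \<beta>')"
  note loop = simple_loop_join_closing_arc[OF arcs(1,2)] and loop' = simple_loop_join_closing_arc[OF arcs(1,3)]
  have compact: "compact J" "compact J'"
    using compact_simple_path_image loop(1) loop'(1) by (auto simp: J_def J'_def)
  note outside_iff = connected_component_of_puncture_iff_outside[OF S hom]
  obtain \<delta> where \<delta>: "\<delta> > 0" and outside_const: "\<And>y y'. y \<in> S - {q} \<Longrightarrow> y' \<in> S - {q} \<Longrightarrow>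
       dist y p < \<delta> \<Longrightarrow> dist y' p < \<delta> \<Longrightarrow> h y \<in> outside (h ` J) \<Longrightarrow> h y' \<in> outside (h ` J) \<Longrightarrow>
       h y \<in> outside (h ` J') \<Longrightarrow> y' \<notin> J' \<Longrightarrow> h y' \<in> outside (h ` J')"
    by (rule outside_locally_constant_near_shared_arc_punctured[OF hom arcs J p(1), folded J_def J'_def])
      (rule that)
  have "q \<in> c3"
    using c3(1) S(2) J(2) by auto
  have c3_sub: "c3 \<subseteq> S - J - J'"
    using c3 connected_component_subset loop(3) loop'(3) unfolding J_def J'_def by blast
  obtain y2 where y2: "y2 \<in> c2" "dist y2 p < \<delta>"
    using p(2) \<delta> unfolding closure_approachable by blast
  have "dist p q > 0"
    using p(1) J(1) loop(3) by auto
  then obtain y3 where y3: "y3 \<in> c3" "dist y3 p < min \<delta> (dist p q)"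
    using p(3) \<delta> unfolding closure_approachable by (metis min_less_iff_conj)
  have y2_in: "y2 \<in> S - J - J' - {q}" and y3_in: "y3 \<in> S - J - J' - {q}"
    using y2(1) y3 c2(2) c3_sub \<open>q \<in> c3\<close> disjoint(3) by (auto simp: J_def J'_def dist_commute)
  have "connected c3"
    using c3(1) by simp
  then have "c3 \<subseteq> connected_component_set (S - J) q"
    using connected_component_maximal[OF \<open>q \<in> c3\<close>] c3_sub by blast
  then have y3_out: "h y3 \<in> outside (h ` J)" "h y3 \<in> outside (h ` J')"
    using outside_iff[OF compact(1) J(1)[folded J_def], of y3] outside_iff[OF compact(2) J(2)[folded J'_def], of y3]
      y3_in y3(1) c3(1) unfolding J'_def by blast+
  have "q \<notin> c1"
    using \<open>q \<in> c3\<close> disjoint(2) by blast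
  then have "y2 \<in> connected_component_set (S - J) q"
    using simple_loop_complement_components[OF S hom loop(1,2) J(1) c1] y2_in y2(1) disjoint(1)
    unfolding J_def by blast
  then have "h y2 \<in> outside (h ` J)"
    using outside_iff[OF compact(1) J(1)[folded J_def], of y2] y2_in by blast
  then have "h y2 \<in> outside (h ` J')"
    using outside_const[of y3 y2] y3_out y2 y3 y2_in y3_in by auto
  then have "y2 \<in> c3"
    using outside_iff[OF compact(2) J(2)[folded J'_def], of y2] y2_in c3(1) unfolding J'_def by blast
  then show False
    using y2(1) disjoint(3) by blast
qed

lemma three_regions_not_adjacent_at_shared_arc:
  fixes \<alpha> \<beta> \<beta>' :: "real \<Rightarrow> 'a::metric_space"
  assumes S: "compact S" "\<And>q. q \<in> S \<Longrightarrow> (S - {q}) homeomorphic (UNIV :: complex set)"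
    and arcs: "arc \<alpha>" "closing_arc \<alpha> \<beta>" "closing_arc \<alpha> \<beta>'"
    and in_S: "path_image \<alpha> \<union> path_image \<beta> \<union> path_image \<beta>' \<subseteq> S"
    and c1: "c1 \<in> components (S - path_image (\<alpha> +++ \<beta>))"
    and c3: "c3 \<in> components (S - path_image (\<alpha> +++ \<beta>'))" "c3 \<inter> path_image \<beta> = {}"
    and c2: "connected c2" "c2 \<subseteq> S - path_image (\<alpha> +++ \<beta>) - path_image (\<alpha> +++ \<beta>')"
    and disjoint: "c1 \<inter> c2 = {}" "c1 \<inter> c3 = {}" "c2 \<inter> c3 = {}"
    and p: "p \<in> path_image \<alpha> - path_image \<beta> - path_image \<beta>'" "p \<in> closure c2" "p \<in> closure c3"
  shows False
proof -
  note loop = simple_loop_join_closing_arc[OF arcs(1,2)] and loop' = simple_loop_join_closing_arc[OF arcs(1,3)]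
  obtain q where q: "q \<in> S - path_image (\<alpha> +++ \<beta>')"
    and c3_eq: "c3 = connected_component_set (S - path_image (\<alpha> +++ \<beta>')) q"
    using c3(1) unfolding components_iff by blast
  then have "q \<notin> path_image (\<alpha> +++ \<beta>)"
    using c3(2) loop(3) loop'(3) by auto
  then have J: "path_image (\<alpha> +++ \<beta>) \<subseteq> S - {q}" "path_image (\<alpha> +++ \<beta>') \<subseteq> S - {q}"
    using q in_S loop(3) loop'(3) by auto
  obtain h k where hom: "homeomorphism (S - {q}) (UNIV :: complex set) h k"
    using S(2) q by (meson DiffD1 homeomorphic_def)
  show False
    using three_regions_not_adjacent_at_shared_arc_punctured[OF S(1) _ hom arcs J c1 c3_eq c3(2) c2 disjoint p]
      q by blast
qed

section \<open>Edge-segments and cells of a drawing\<close>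

lemma compact_S2: "compact S2"
  by (simp add: S2_def)

lemma punctured_S2_homeomorphic_plane:
  assumes "q \<in> S2"
  shows "(S2 - {q}) homeomorphic (UNIV :: complex set)"
proof -
  let ?P = "{x :: real^3. axis 1 1 \<bullet> x = 0}"
  have "(S2 - {q}) homeomorphic ?P"
    using assms unfolding S2_def
    by (intro homeomorphic_punctured_sphere_affine) (auto simp: affine_hyperplane)
  also have "?P homeomorphic (UNIV :: complex set)"
    by (simp add: homeomorphic_affine_sets_eq affine_hyperplane)
  finally show ?thesis .
qed

lemma edge_set_eq_image: "edge_set g e = g e ` {0..1}"
  by (simp add: edge_set_def path_image_def)

lemma endpoints_eq: "endpoints g e = {g e 0, g e 1}"
  by (simp add: endpoints_def pathstart_def pathfinish_def)

lemma edge_segmentE: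
  assumes "edge_segment V E g e p q A"
  obtains s t where "e \<in> E" "0 \<le> s" "s < t" "t \<le> 1" "{g e s, g e t} = {p, q}" "A = g e ` {s..t}"
    "\<And>r. s < r \<Longrightarrow> r < t \<Longrightarrow> g e r \<notin> crossings V E g"
  using assms unfolding edge_segment_def by blast

lemma edge_segment_subset:
  assumes "edge_segment V E g e p q A"
  shows "e \<in> E" "A \<subseteq> edge_set g e"
  using assms by (auto elim!: edge_segmentE simp: edge_set_eq_image)

lemma edge_segment_ends_mem:
  assumes "edge_segment V E g e p q A"
  shows "p \<in> A" "q \<in> A"
proof -
  obtain s t where "s < t" "{g e s, g e t} = {p, q}" "A = g e ` {s..t}"
    using assms by (rule edge_segmentE)
  then show "p \<in> A" "q \<in> A"
    by (auto simp: doubleton_eq_iff)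
qed

lemma uncrossed_edge_segment:
  assumes "e \<in> uncrossed_edges V E g" "endpoints g e = {u, v}"
  shows "edge_segment V E g e u v (edge_set g e)"
proof -
  have e: "e \<in> E" "edge_set g e \<inter> crossings V E g = {}"
    using assms(1) by (auto simp: uncrossed_edges_def)
  have "g e r \<notin> crossings V E g" if "0 < r" "r < 1" for r
  proof -
    have "g e r \<in> edge_set g e"
      using that by (simp add: edge_set_eq_image)
    then show ?thesis
      using e(2) by blast
  qed
  then have "\<exists>s t. 0 \<le> s \<and> s < t \<and> t \<le> 1 \<and> {g e s, g e t} = {u, v} \<and> edge_set g e = g e ` {s..t} \<and>
      (\<forall>r. s < r \<and> r < t \<longrightarrow> g e r \<notin> crossings V E g)"
    using assms(2) by (intro exI[of _ "0::real"] exI[of _ "1::real"]) (auto simp: endpoints_eq edge_set_eq_image)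
  then show ?thesis
    unfolding edge_segment_def using e(1) by blast
qed

lemma cells_disjoint:
  assumes "c \<in> cells V E g" "c' \<in> cells V E g" "c \<noteq> c'"
  shows "c \<inter> c' = {}"
  using assms components_nonoverlap by (auto simp: cells_def)

lemma cell_boundary_subset_closure: "cell_boundary c \<subseteq> closure c"
  by (auto simp: cell_boundary_def)

definition edge_loop_cell :: "('e \<Rightarrow> real \<Rightarrow> real^3) \<Rightarrow> 'e \<Rightarrow> (real^3) set \<Rightarrow> bool" where
  "edge_loop_cell g e c \<longleftrightarrow>
     (\<exists>\<beta>. closing_arc (g e) \<beta> \<and> path_image \<beta> \<subseteq> S2 \<and> cell_boundary c = edge_set g e \<union> path_image \<beta>)"

lemma edge_loop_cellI:
  assumes ends: "endpoints g e = {u, v}"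
    and \<beta>: "arc \<beta>" "pathstart \<beta> = v" "pathfinish \<beta> = u"
    and meet: "path_image \<beta> \<inter> edge_set g e \<subseteq> {u, v}"
    and "path_image \<beta> \<subseteq> S2" "cell_boundary c = edge_set g e \<union> path_image \<beta>"
  shows "edge_loop_cell g e c"
proof -
  have meet': "path_image (g e) \<inter> path_image \<beta> \<subseteq> {pathstart (g e), pathfinish (g e)}"
    using meet ends by (auto simp: edge_set_def endpoints_def)
  consider "pathstart (g e) = u" "pathfinish (g e) = v" | "pathstart (g e) = v" "pathfinish (g e) = u"
    using ends by (auto simp: endpoints_def doubleton_eq_iff)
  then have "closing_arc (g e) \<beta> \<or> closing_arc (g e) (reversepath \<beta>)"
    by cases (use \<beta> meet' arc_reversepath in \<open>auto simp: closing_arc_def\<close>)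
  then show ?thesis
    using assms(6,7) unfolding edge_loop_cell_def by (metis path_image_reversepath)
qed

context
  fixes V :: "(real^3) set" and E :: "'e set" and g :: "'e \<Rightarrow> real \<Rightarrow> real^3"
  assumes dr: "drawing V E g"
begin

lemma arc_edge: "e \<in> E \<Longrightarrow> arc (g e)"
  using dr by (auto simp: drawing_def)

lemma inj_on_edge: "e \<in> E \<Longrightarrow> inj_on (g e) {0..1}"
  using arc_edge by (auto simp: arc_def)

lemma edge_set_subset_S2: "e \<in> E \<Longrightarrow> edge_set g e \<subseteq> S2"
  using dr by (auto simp: drawing_def)

lemma edge_set_Int_vertices: "e \<in> E \<Longrightarrow> edge_set g e \<inter> V = endpoints g e"
  using dr by (auto simp: drawing_def)

lemma edge_segment_ends_neq:
  assumes "edge_segment V E g e p q A"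
  shows "p \<noteq> q"
proof -
  obtain s t where st: "e \<in> E" "0 \<le> s" "s < t" "t \<le> 1" "{g e s, g e t} = {p, q}"
    using assms by (rule edge_segmentE)
  have "g e s \<noteq> g e t"
    using inj_on_edge[OF st(1)] st(2-4) by (auto dest: inj_onD)
  then show ?thesis
    using st(5) by (auto simp: doubleton_eq_iff)
qed

lemma edge_segment_arc:
  assumes "edge_segment V E g e p q A"
  obtains \<alpha> where "arc \<alpha>" "pathstart \<alpha> = p" "pathfinish \<alpha> = q" "path_image \<alpha> = A"
proof -
  obtain s t where st: "e \<in> E" "0 \<le> s" "s < t" "t \<le> 1" "{g e s, g e t} = {p, q}" "A = g e ` {s..t}"
    using assms by (rule edge_segmentE)
  have sub: "arc (subpath s t (g e))" "arc (subpath t s (g e))"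
    using arc_subpath_arc[OF arc_edge[OF st(1)]] st(2-4) by auto
  consider "g e s = p" "g e t = q" | "g e s = q" "g e t = p"
    using st(5) by (auto simp: doubleton_eq_iff)
  then show ?thesis
  proof cases
    case 1
    then show ?thesis
      using that[OF sub(1)] st(3,6) by (simp add: path_image_subpath)
  next
    case 2
    then show ?thesis
      using that[OF sub(2)] st(3,6) by (simp add: path_image_subpath)
  qed
qed

lemma edge_segment_special_point_is_end:
  assumes "edge_segment V E g e p q A" "y \<in> A" "y \<in> V \<union> crossings V E g"
  shows "y \<in> {p, q}"
proof -
  obtain s t where st: "e \<in> E" "0 \<le> s" "s < t" "t \<le> 1" "{g e s, g e t} = {p, q}" "A = g e ` {s..t}"
    "\<And>r. s < r \<Longrightarrow> r < t \<Longrightarrow> g e r \<notin> crossings V E g"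
    using edge_segmentE[OF assms(1)] by metis
  obtain r where r: "r \<in> {s..t}" "y = g e r"
    using st(6) assms(2) by auto
  show ?thesis
  proof (rule ccontr)
    assume "y \<notin> {p, q}"
    then have inner: "s < r" "r < t"
      using r st(5) by (auto simp: order_le_less)
    then have "y \<in> V"
      using st(7) r(2) assms(3) by auto
    moreover have "y \<in> edge_set g e"
      using r st(2,4) by (auto simp: edge_set_eq_image)
    ultimately have "g e r = g e 0 \<or> g e r = g e 1"
      using edge_set_Int_vertices[OF st(1)] r(2) by (auto simp: endpoints_eq)
    then have "r = 0 \<or> r = 1"
      using inj_on_edge[OF st(1)] r(1) st(2,4) by (auto dest: inj_onD)
    then show False
      using inner st(2,4) by auto
  qed
qed

text \<open>Neither segment can contain an end of the other in its interior, as the ends are vertices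
  or crossings; so overlapping parameter intervals are nested.\<close>

lemma edge_segments_same_edge_Int:
  assumes S: "edge_segment V E g e p q A" and S': "edge_segment V E g e p' q' A'"
    and special: "{p, q, p', q'} \<subseteq> V \<union> crossings V E g" and y: "y \<in> A \<inter> A'" "y \<notin> {p, q}"
  shows "{p, q} = {p', q'}"
proof -
  obtain s t where st: "e \<in> E" "0 \<le> s" "s < t" "t \<le> 1" "{g e s, g e t} = {p, q}" "A = g e ` {s..t}"
    using S by (rule edge_segmentE)
  obtain s' t' where st': "0 \<le> s'" "s' < t'" "t' \<le> 1" "{g e s', g e t'} = {p', q'}" "A' = g e ` {s'..t'}"
    using S' by (rule edge_segmentE)
  have inj: "inj_on (g e) {0..1}"
    using inj_on_edge[OF st(1)] .
  obtain r where r: "r \<in> {s..t}" "r \<in> {s'..t'}" "y = g e r"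
    using y(1) st(2,4,6) st'(1,3,5) inj by (auto dest: inj_onD)
  have inner: "s < r" "r < t"
    using r(1,3) y(2) st(5) by (auto simp: order_le_less)
  have outside: "\<not> (s < w \<and> w < t)" if "w \<in> {s', t'}" for w
  proof
    assume w: "s < w \<and> w < t"
    have "g e w \<in> A"
      using w st(6) by auto
    moreover have "g e w \<in> {p', q'}"
      using that st'(4) by blast
    ultimately have "g e w \<in> {p, q}"
      using edge_segment_special_point_is_end[OF S] special by blast
    then have "g e w = g e s \<or> g e w = g e t"
      using st(5) by blast
    moreover have "w \<in> {0..1}" "s \<in> {0..1}" "t \<in> {0..1}"
      using w st(2-4) by auto
    ultimately have "w = s \<or> w = t"
      using inj_onD[OF inj] by metis
    then show False
      using w by auto
  qed
  have "s' \<le> s" "t \<le> t'"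
    using outside[of s'] outside[of t'] r(2) inner by auto
  then have "{g e s, g e t} \<subseteq> A'"
    using st(3) st'(5) by auto
  then have "p \<in> A'" "q \<in> A'"
    unfolding st(5) by auto
  then have "{p, q} \<subseteq> {p', q'}"
    using edge_segment_special_point_is_end[OF S'] special by blast
  then show ?thesis
    using edge_segment_ends_neq[OF S] edge_segment_ends_neq[OF S'] by (auto simp: doubleton_eq_iff)
qed

lemma edge_segments_Int:
  assumes S: "edge_segment V E g e p q A" and S': "edge_segment V E g e' p' q' A'"
    and special: "{p, q, p', q'} \<subseteq> V \<union> crossings V E g" and ne: "{p, q} \<noteq> {p', q'}"
  shows "A \<inter> A' \<subseteq> {p, q} \<inter> {p', q'}"
proof -
  have end_of_S: "y \<in> {p, q}" if "y \<in> A \<inter> A'" for y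
  proof (cases "e = e'")
    case True
    then show ?thesis
      using edge_segments_same_edge_Int[OF S _ special] S' that ne by blast
  next
    case False
    then have "y \<in> V \<union> crossings V E g"
      using edge_segment_subset[OF S] edge_segment_subset[OF S'] that by (auto simp: crossings_def)
    then show ?thesis
      using edge_segment_special_point_is_end[OF S] that by blast
  qed
  have end_of_S': "y \<in> {p', q'}" if "y \<in> A \<inter> A'" for y
  proof (cases "e = e'")
    case True
    then show ?thesis
      using edge_segments_same_edge_Int[OF S' _ _ ] S that ne special by blast
  next
    case False
    then have "y \<in> V \<union> crossings V E g"
      using edge_segment_subset[OF S] edge_segment_subset[OF S'] that by (auto simp: crossings_def)
    then show ?thesis
      using edge_segment_special_point_is_end[OF S'] that by blast
  qed
  show ?thesis
    using end_of_S end_of_S' by blast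
qed

lemma closed_drawing_points: "closed (drawing_points V E g)"
proof -
  have "finite V" "finite E"
    using dr by (auto simp: drawing_def)
  moreover have "closed (edge_set g e)" if "e \<in> E" for e
    using arc_edge[OF that] by (simp add: edge_set_def closed_path_image arc_imp_path)
  ultimately show ?thesis
    unfolding drawing_points_def by (intro closed_Un closed_UN finite_imp_closed) auto
qed

lemma cellD:
  assumes "c \<in> cells V E g"
  shows "connected c" "c \<noteq> {}" "c \<subseteq> S2 - drawing_points V E g" "openin (top_of_set S2) c"
proof -
  show "connected c" "c \<noteq> {}" "c \<subseteq> S2 - drawing_points V E g"
    using assms by (auto simp: cells_def in_components_connected in_components_nonempty dest: in_components_subset)
  have "openin (top_of_set S2) (S2 - drawing_points V E g)"
    using closed_drawing_points by (simp add: Diff_eq openin_open_Int open_Compl)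
  moreover have "locally connected S2"
    by (simp add: S2_def locally_connected_sphere)
  ultimately show "openin (top_of_set S2) c"
    using assms by (auto simp: cells_def locally_connected_open_component)
qed

lemma cell_Int_closure:
  assumes c: "c \<in> cells V E g" and c': "c' \<in> cells V E g" and "c \<noteq> c'"
  shows "c' \<inter> closure c = {}"
proof -
  obtain U where U: "open U" "c' = S2 \<inter> U"
    using cellD(4)[OF c'] by (auto simp: openin_open)
  have "U \<inter> c = {}"
    using cells_disjoint[OF c c' \<open>c \<noteq> c'\<close>] U(2) cellD(3)[OF c] by auto
  then have "U \<inter> closure c = {}"
    using open_Int_closure_eq_empty[OF U(1)] by simp
  then show ?thesis
    using U(2) by auto
qed

lemma cell_in_components_boundary_complement:
  assumes c: "c \<in> cells V E g"
  shows "c \<in> components (S2 - cell_boundary c)"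
proof -
  obtain y where y: "y \<in> c"
    using cellD(2)[OF c] by auto
  define K where "K = connected_component_set (S2 - cell_boundary c) y"
  have c_sub: "c \<subseteq> S2 - cell_boundary c"
    using cellD(3)[OF c] by (auto simp: cell_boundary_def)
  have cK: "c \<subseteq> K" and KS: "K \<subseteq> S2 - cell_boundary c"
    unfolding K_def using connected_component_maximal[OF y cellD(1)[OF c] c_sub]
    by (auto simp: connected_component_subset)
  obtain U where U: "open U" "c = S2 \<inter> U"
    using cellD(4)[OF c] by (auto simp: openin_open)
  have "c = K \<inter> U"
    using U cK KS by auto
  then have "openin (top_of_set K) c"
    using U(1) by (simp add: openin_open_Int)
  moreover have "c = K \<inter> closure c"
    using cK KS closure_subset by (auto simp: cell_boundary_def)
  then have "closedin (top_of_set K) c"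
    by (metis closedin_closed_Int closed_closure)
  ultimately have "c = K"
    using connected_clopen[THEN iffD1, rule_format, of K c] y cK by (auto simp: K_def)
  then show ?thesis
    using y c_sub by (auto simp: K_def components_iff)
qed

lemma is_U5_edge_loop_cell:
  assumes "is_U5 V E g c"
  shows "\<exists>e \<in> uncrossed_edges V E g. edge_loop_cell g e c"
proof -
  obtain u v e x e1 e2 A1 A2 where U: "u \<in> V" "v \<in> V" "e \<in> uncrossed_edges V E g" "endpoints g e = {u, v}"
      "x \<in> crossings V E g" "edge_segment V E g e1 v x A1" "edge_segment V E g e2 x u A2"
      "cell_boundary c = edge_set g e \<union> A1 \<union> A2"
    using assms unfolding is_U5_def by blast
  have edge: "edge_segment V E g e u v (edge_set g e)"
    by (rule uncrossed_edge_segment[OF U(3,4)])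
  have special: "{u, v, x} \<subseteq> V \<union> crossings V E g" "x \<notin> V"
    using U by (auto simp: crossings_def)
  have "u \<noteq> v" "x \<noteq> u" "x \<noteq> v"
    using edge_segment_ends_neq[OF edge] special(2) U(1,2) by auto
  then have A12: "A1 \<inter> A2 \<subseteq> {x}" and A1e: "A1 \<inter> edge_set g e \<subseteq> {u, v}" and A2e: "A2 \<inter> edge_set g e \<subseteq> {u, v}"
    using edge_segments_Int[OF U(6) U(7)] edge_segments_Int[OF U(6) edge] edge_segments_Int[OF U(7) edge]
      special U(1,2) by (auto simp: doubleton_eq_iff)
  obtain \<alpha>1 where \<alpha>1: "arc \<alpha>1" "pathstart \<alpha>1 = v" "pathfinish \<alpha>1 = x" "path_image \<alpha>1 = A1"
    using edge_segment_arc[OF U(6)] by blast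
  obtain \<alpha>2 where \<alpha>2: "arc \<alpha>2" "pathstart \<alpha>2 = x" "pathfinish \<alpha>2 = u" "path_image \<alpha>2 = A2"
    using edge_segment_arc[OF U(7)] by blast
  have arc: "arc (\<alpha>1 +++ \<alpha>2)"
    using \<alpha>1 \<alpha>2 A12 by (intro arc_join) auto
  have image: "path_image (\<alpha>1 +++ \<alpha>2) = A1 \<union> A2"
    using \<alpha>1 \<alpha>2 by (simp add: path_image_join)
  have "edge_loop_cell g e c"
  proof (rule edge_loop_cellI[OF U(4) arc])
    show "pathstart (\<alpha>1 +++ \<alpha>2) = v" "pathfinish (\<alpha>1 +++ \<alpha>2) = u"
      using \<alpha>1 \<alpha>2 by simp_all
    show "path_image (\<alpha>1 +++ \<alpha>2) \<inter> edge_set g e \<subseteq> {u, v}"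
      using image A1e A2e by auto
    show "path_image (\<alpha>1 +++ \<alpha>2) \<subseteq> S2"
      using image edge_segment_subset[OF U(6)] edge_segment_subset[OF U(7)] edge_set_subset_S2 by blast
    show "cell_boundary c = edge_set g e \<union> path_image (\<alpha>1 +++ \<alpha>2)"
      using image U(8) by (simp add: Un_assoc)
  qed
  then show ?thesis
    using U(3) by blast
qed

lemma is_U6_edge_loop_cell:
  assumes "is_U6 V E g c"
  shows "\<exists>e \<in> uncrossed_edges V E g. edge_loop_cell g e c"
proof -
  obtain u v e x1 x2 e1 e2 e3 A1 A2 A3 where U: "u \<in> V" "v \<in> V" "e \<in> uncrossed_edges V E g"
      "endpoints g e = {u, v}" "x1 \<in> crossings V E g" "x2 \<in> crossings V E g"
      "edge_segment V E g e1 v x1 A1" "edge_segment V E g e2 x1 x2 A2" "edge_segment V E g e3 x2 u A3"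
      "cell_boundary c = edge_set g e \<union> A1 \<union> A2 \<union> A3"
    using assms unfolding is_U6_def by blast
  have edge: "edge_segment V E g e u v (edge_set g e)"
    by (rule uncrossed_edge_segment[OF U(3,4)])
  have special: "{u, v, x1, x2} \<subseteq> V \<union> crossings V E g" "x1 \<notin> V" "x2 \<notin> V"
    using U by (auto simp: crossings_def)
  have "u \<noteq> v" "x1 \<noteq> x2" "x1 \<noteq> u" "x1 \<noteq> v" "x2 \<noteq> u" "x2 \<noteq> v"
    using edge_segment_ends_neq[OF edge] edge_segment_ends_neq[OF U(8)] special(2,3) U(1,2) by auto
  then have A: "A1 \<inter> A2 \<subseteq> {x1}" "A2 \<inter> A3 \<subseteq> {x2}" "A1 \<inter> A3 = {}"
      and Ae: "A1 \<inter> edge_set g e \<subseteq> {u, v}" "A2 \<inter> edge_set g e \<subseteq> {u, v}" "A3 \<inter> edge_set g e \<subseteq> {u, v}"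
    using edge_segments_Int[OF U(7) U(8)] edge_segments_Int[OF U(8) U(9)] edge_segments_Int[OF U(7) U(9)]
      edge_segments_Int[OF U(7) edge] edge_segments_Int[OF U(8) edge] edge_segments_Int[OF U(9) edge]
      special U(1,2) by (auto simp: doubleton_eq_iff)
  obtain \<alpha>1 where \<alpha>1: "arc \<alpha>1" "pathstart \<alpha>1 = v" "pathfinish \<alpha>1 = x1" "path_image \<alpha>1 = A1"
    using edge_segment_arc[OF U(7)] by blast
  obtain \<alpha>2 where \<alpha>2: "arc \<alpha>2" "pathstart \<alpha>2 = x1" "pathfinish \<alpha>2 = x2" "path_image \<alpha>2 = A2"
    using edge_segment_arc[OF U(8)] by blast
  obtain \<alpha>3 where \<alpha>3: "arc \<alpha>3" "pathstart \<alpha>3 = x2" "pathfinish \<alpha>3 = u" "path_image \<alpha>3 = A3"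
    using edge_segment_arc[OF U(9)] by blast
  define \<alpha> where "\<alpha> = (\<alpha>1 +++ \<alpha>2) +++ \<alpha>3"
  have "arc (\<alpha>1 +++ \<alpha>2)" "path_image (\<alpha>1 +++ \<alpha>2) = A1 \<union> A2"
    using \<alpha>1 \<alpha>2 A(1) by (auto intro!: arc_join simp: path_image_join)
  then have arc: "arc \<alpha>" and image: "path_image \<alpha> = A1 \<union> A2 \<union> A3"
    using \<alpha>1 \<alpha>2 \<alpha>3 A(2,3) by (auto intro!: arc_join simp: path_image_join \<alpha>_def)
  have "edge_loop_cell g e c"
  proof (rule edge_loop_cellI[OF U(4) arc])
    show "pathstart \<alpha> = v" "pathfinish \<alpha> = u"
      using \<alpha>1 \<alpha>3 by (simp_all add: \<alpha>_def)
    show "path_image \<alpha> \<inter> edge_set g e \<subseteq> {u, v}"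
      using image Ae by auto
    show "path_image \<alpha> \<subseteq> S2"
      using image edge_segment_subset[OF U(7)] edge_segment_subset[OF U(8)] edge_segment_subset[OF U(9)]
        edge_set_subset_S2 by blast
    show "cell_boundary c = edge_set g e \<union> path_image \<alpha>"
      using image U(10) by (simp add: Un_assoc)
  qed
  then show ?thesis
    using U(3) by blast
qed

text \<open>A U5 cell has exactly one crossing on its boundary, a U6 cell two.\<close>

lemma not_is_U5_and_is_U6:
  assumes "is_U5 V E g c" "is_U6 V E g c"
  shows False
proof -
  obtain u v e x e1 e2 A1 A2 where U: "u \<in> V" "v \<in> V" "e \<in> uncrossed_edges V E g"
      "edge_segment V E g e1 v x A1" "edge_segment V E g e2 x u A2"
      "cell_boundary c = edge_set g e \<union> A1 \<union> A2"
    using assms(1) unfolding is_U5_def by blast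
  obtain v' e' x1 x2 e1' e2' A1' A2' A3' where W: "x1 \<in> crossings V E g" "x2 \<in> crossings V E g"
      "edge_segment V E g e1' v' x1 A1'" "edge_segment V E g e2' x1 x2 A2'"
      "cell_boundary c = edge_set g e' \<union> A1' \<union> A2' \<union> A3'"
    using assms(2) unfolding is_U6_def by blast
  have "cell_boundary c \<inter> crossings V E g \<subseteq> {x}"
  proof
    fix y assume y: "y \<in> cell_boundary c \<inter> crossings V E g"
    then have "y \<notin> edge_set g e" "y \<notin> V"
      using U(3) by (auto simp: uncrossed_edges_def crossings_def)
    then show "y \<in> {x}"
      using y U(1,2,6) edge_segment_special_point_is_end[OF U(4)] edge_segment_special_point_is_end[OF U(5)]
      by auto
  qed
  moreover have "x1 \<in> cell_boundary c" "x2 \<in> cell_boundary c"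
    using edge_segment_ends_mem[OF W(3)] edge_segment_ends_mem[OF W(4)] W(5) by auto
  ultimately have "x1 = x2"
    using W(1,2) by blast
  then show False
    using edge_segment_ends_neq[OF W(4)] by simp
qed

lemma no_three_edge_loop_cells:
  assumes e: "e \<in> E" and cells: "c1 \<in> cells V E g" "c2 \<in> cells V E g" "c3 \<in> cells V E g"
    and distinct: "c1 \<noteq> c2" "c1 \<noteq> c3" "c2 \<noteq> c3"
    and loops: "edge_loop_cell g e c1" "edge_loop_cell g e c2" "edge_loop_cell g e c3"
  shows False
proof -
  obtain \<beta> where \<beta>: "closing_arc (g e) \<beta>" "path_image \<beta> \<subseteq> S2"
      "cell_boundary c1 = edge_set g e \<union> path_image \<beta>"
    using loops(1) by (auto simp: edge_loop_cell_def)
  obtain \<beta>' where \<beta>': "closing_arc (g e) \<beta>'" "path_image \<beta>' \<subseteq> S2"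
      "cell_boundary c3 = edge_set g e \<union> path_image \<beta>'"
    using loops(3) by (auto simp: edge_loop_cell_def)
  have edge_c2: "edge_set g e \<subseteq> closure c2"
    using loops(2) cell_boundary_subset_closure by (fastforce simp: edge_loop_cell_def)
  have loop: "path_image (g e +++ \<beta>) = cell_boundary c1" "path_image (g e +++ \<beta>') = cell_boundary c3"
    using simple_loop_join_closing_arc(3)[OF arc_edge[OF e]] \<beta>(1,3) \<beta>'(1,3) by (auto simp: edge_set_def)
  have closures: "c2 \<inter> closure c1 = {}" "c3 \<inter> closure c1 = {}" "c2 \<inter> closure c3 = {}"
    using cell_Int_closure cells distinct by blast+
  define p where "p = g e (1/2)"
  have "p \<noteq> pathstart (g e)" "p \<noteq> pathfinish (g e)"
    using inj_on_edge[OF e] by (auto simp: p_def pathstart_def pathfinish_def dest: inj_onD)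
  moreover have p_edge: "p \<in> edge_set g e"
    by (simp add: p_def edge_set_eq_image)
  ultimately have p: "p \<in> path_image (g e) - path_image \<beta> - path_image \<beta>'"
    using \<beta>(1) \<beta>'(1) unfolding closing_arc_def edge_set_def by blast
  show False
  proof (rule three_regions_not_adjacent_at_shared_arc[OF compact_S2 punctured_S2_homeomorphic_plane
        arc_edge[OF e] \<beta>(1) \<beta>'(1) _ _ _ _ _ _ _ _ _ p])
    show "path_image (g e) \<union> path_image \<beta> \<union> path_image \<beta>' \<subseteq> S2"
      using \<beta>(2) \<beta>'(2) edge_set_subset_S2[OF e] by (auto simp: edge_set_def)
    show "c1 \<in> components (S2 - path_image (g e +++ \<beta>))"
      using cell_in_components_boundary_complement[OF cells(1)] loop(1) by simp
    show "c3 \<in> components (S2 - path_image (g e +++ \<beta>'))"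
      using cell_in_components_boundary_complement[OF cells(3)] loop(2) by simp
    show "c3 \<inter> path_image \<beta> = {}"
      using closures(2) \<beta>(3) cell_boundary_subset_closure[of c1] by blast
    show "connected c2"
      using cellD(1)[OF cells(2)] .
    show "c2 \<subseteq> S2 - path_image (g e +++ \<beta>) - path_image (g e +++ \<beta>')"
      using cellD(3)[OF cells(2)] closures(1,3) loop cell_boundary_subset_closure by blast
    show "c1 \<inter> c2 = {}" "c1 \<inter> c3 = {}" "c2 \<inter> c3 = {}"
      using cells_disjoint cells distinct by blast+
    show "p \<in> closure c2"
      using edge_c2 p_edge by blast
    show "p \<in> closure c3"
      using \<beta>'(3) cell_boundary_subset_closure[of c3] p_edge by blast
  qed
qed

end

section \<open>Counting\<close>

lemma finite_card_le_2I:
  assumes "\<And>a b c. a \<in> X \<Longrightarrow> b \<in> X \<Longrightarrow> c \<in> X \<Longrightarrow> a \<noteq> b \<Longrightarrow> a \<noteq> c \<Longrightarrow> b \<noteq> c \<Longrightarrow> False"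
  shows "finite X \<and> card X \<le> 2"
proof (rule ccontr)
  assume "\<not> (finite X \<and> card X \<le> 2)"
  then obtain T where T: "T \<subseteq> X" "card T = 3"
    by (metis infinite_arbitrarily_large not_le obtain_subset_with_card_n Suc_leI numeral_2_eq_2 numeral_3_eq_3)
  then obtain a b c where "T = {a, b, c}" "a \<noteq> b" "b \<noteq> c" "a \<noteq> c"
    by (auto simp: card_3_iff)
  then show False
    using assms T(1) by blast
qed

lemma finite_card_le_mult_if_fibres_bounded:
  assumes B: "finite B" and cover: "\<And>a. a \<in> A \<Longrightarrow> \<exists>b\<in>B. R a b"
    and fibres: "\<And>b. b \<in> B \<Longrightarrow> finite {a \<in> A. R a b} \<and> card {a \<in> A. R a b} \<le> k"
  shows "finite A \<and> card A \<le> k * card B"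
proof -
  have A_sub: "A \<subseteq> (\<Union>b\<in>B. {a \<in> A. R a b})"
    using cover by blast
  have fin: "finite (\<Union>b\<in>B. {a \<in> A. R a b})"
    using B fibres by blast
  have "card A \<le> card (\<Union>b\<in>B. {a \<in> A. R a b})"
    by (rule card_mono[OF fin A_sub])
  also have "\<dots> \<le> (\<Sum>b\<in>B. card {a \<in> A. R a b})"
    by (rule card_UN_le[OF B])
  also have "\<dots> \<le> (\<Sum>b\<in>B. k)"
    using fibres by (intro sum_mono) blast
  finally show ?thesis
    using finite_subset[OF A_sub fin] by (simp add: mult.commute)
qed

theorem mainTheorem7:
  fixes V :: "(real^3) set" and E :: "'e set" and g :: "'e \<Rightarrow> real \<Rightarrow> real^3"
  assumes "connected_drawing V E g"
  shows "2 * card (uncrossed_edges V E g) \<ge>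
           card {c \<in> cells V E g. is_U5 V E g c} + card {c \<in> cells V E g. is_U6 V E g c}"
proof -
  have dr: "drawing V E g"
    using assms by (simp add: connected_drawing_def)
  define U5 U6 where "U5 = {c \<in> cells V E g. is_U5 V E g c}" and "U6 = {c \<in> cells V E g. is_U6 V E g c}"
  have bound: "finite (U5 \<union> U6) \<and> card (U5 \<union> U6) \<le> 2 * card (uncrossed_edges V E g)"
  proof (rule finite_card_le_mult_if_fibres_bounded[where R = "\<lambda>c e. edge_loop_cell g e c"])
    show "finite (uncrossed_edges V E g)"
      using dr by (auto simp: drawing_def uncrossed_edges_def)
    show "\<exists>e\<in>uncrossed_edges V E g. edge_loop_cell g e c" if "c \<in> U5 \<union> U6" for c
      using that is_U5_edge_loop_cell[OF dr] is_U6_edge_loop_cell[OF dr] by (auto simp: U5_def U6_def)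
    show "finite {c \<in> U5 \<union> U6. edge_loop_cell g e c} \<and> card {c \<in> U5 \<union> U6. edge_loop_cell g e c} \<le> 2"
      if "e \<in> uncrossed_edges V E g" for e
      using that no_three_edge_loop_cells[OF dr, of e]
      by (intro finite_card_le_2I) (auto simp: U5_def U6_def uncrossed_edges_def)
  qed
  moreover have "U5 \<inter> U6 = {}"
    using not_is_U5_and_is_U6[OF dr] by (auto simp: U5_def U6_def)
  ultimately have "card (U5 \<union> U6) = card U5 + card U6"
    by (simp add: card_Un_disjoint)
  then show ?thesis
    using bound by (simp add: U5_def U6_def)
qed

end
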